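(* Two irrationals $\alpha,\beta\in(1,2)$ are $\mathrm{PSL}(2,\mathbb Z)$-equivalent (i.e. $\beta=g\alpha$ for some $g\in\mathrm{PSL}(2,\mathbb Z)$ acting by Möbius transformations) if and only if there exist integers $r,s>0$ such that $t_r(\alpha)=t_s(\beta)$. Moreover, $\alpha$ is $\mathrm{PSL}(2,\mathbb Z)$-equivalent to each of its tails $t_m(\alpha)$.
   Context: The Lehner map on $[1,2)$ is $L(x)=\frac{1}{2-x}$ for $x\in[1,3/2)$ and $L(x)=\frac{1}{x-1}$ for $x\in[3/2,2)$. For irrational $x\in(1,2)$, its Lehner digits are $(a_i,\epsilon_i)=(2,-1)$ if $L^i(x)\in[1,3/2)$ and $(1,+1)$ if $L^i(x)\in[3/2,2)$, and $x=a_0+\cfrac{\epsilon_0}{a_1+\cfrac{\epsilon_1}{a_2+\cdots}}=[\![(a_0,\epsilon_0)(a_1,\epsilon_1)\cdots]\!]$. For $\alpha=[\![(a_0,\epsilon_0)(a_1,\epsilon_1)\cdots]\!]$ the $m$-tail is $t_m(\alpha)=(-\epsilon_0)(-\epsilon_1)\cdots(-\epsilon_m)\,[\![(a_{m+1},\epsilon_{m+1})(a_{m+2},\epsilon_{m+2})\cdots]\!]$, where $[\![\cdots]\!]$ denotes the value of the continued fraction with those digits. *)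

theory Defs
  imports Complex_Main
begin

definition lehner :: "real \<Rightarrow> real" where
  "lehner x = (if x < 3/2 then 1 / (2 - x) else 1 / (x - 1))"

definition lehner_digit :: "real \<Rightarrow> nat \<Rightarrow> int \<times> int" where
  "lehner_digit x i = (if (lehner ^^ i) x < 3/2 then (2, -1) else (1, 1))"

fun cf_fin :: "(nat \<Rightarrow> int \<times> int) \<Rightarrow> nat \<Rightarrow> nat \<Rightarrow> real" where
  "cf_fin d 0 k = of_int (fst (d k))"
| "cf_fin d (Suc n) k = of_int (fst (d k)) + of_int (snd (d k)) / cf_fin d n (Suc k)"

definition cf_val :: "(nat \<Rightarrow> int \<times> int) \<Rightarrow> real" where
  "cf_val d = lim (\<lambda>n. cf_fin d n 0)"

definition lehner_tail :: "nat \<Rightarrow> real \<Rightarrow> real" where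
  "lehner_tail m \<alpha> =
     (\<Prod>i\<le>m. - of_int (snd (lehner_digit \<alpha> i))) *
     cf_val (\<lambda>k. lehner_digit \<alpha> (m + 1 + k))"

definition psl2z_equiv :: "real \<Rightarrow> real \<Rightarrow> bool" where
  "psl2z_equiv \<alpha> \<beta> \<longleftrightarrow>
     (\<exists>a b c d :: int. a * d - b * c = 1 \<and>
        \<beta> = (of_int a * \<alpha> + of_int b) / (of_int c * \<alpha> + of_int d))"

end

theory Submission
  imports Defs
begin

text \<open>Write \<open>L\<close> for the Lehner map. The \<open>m\<close>-tail of \<open>\<alpha> \<in> (1,2)\<close> is
  \<open>\<plusminus>L\<^sup>m\<^sup>+\<^sup>1(\<alpha>)\<close>, because the Lehner continued fraction of any \<open>z \<in> [1,2]\<close> converges to \<open>z\<close>: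
  its \<open>n\<close>-th convergent and \<open>z\<close> are images of points of \<open>[1,2]\<close> under one integer Moebius map
  of determinant \<open>\<plusminus>1\<close> whose denominator is at least \<open>n + 1\<close>. Each signed step
  \<open>v \<mapsto> \<plusminus>L(v)\<close> is a Moebius transformation in \<open>PSL(2,\<int>)\<close>, so \<open>\<alpha>\<close> is equivalent to all its
  tails; this gives the second claim and the backward implication.

  Conversely, call \<open>x\<close> and \<open>y\<close> orbit equivalent when the Lehner orbits of their representatives
  modulo 1 in \<open>[1,2)\<close> meet with equal accumulated signs. This equivalence relation is invariant
  under \<open>x \<mapsto> x + 1\<close> and, by the explicit expansions of \<open>1 + 1/(z+j)\<close> and \<open>2 - 1/(z+j)\<close>, under
  \<open>x \<mapsto> -1/x\<close>; by the Euclidean algorithm it is invariant under \<open>PSL(2,\<int>)\<close>, and meeting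
  orbits produce equal tails.\<close>

section \<open>Moebius transformations and \<open>PSL(2,\<int>)\<close>-equivalence\<close>

lemma moebius_denominator_nonzero:
  fixes x :: real
  assumes "x \<notin> \<rat>" and "a * d - b * c = 1"
  shows "of_int c * x + of_int d \<noteq> 0"
proof
  assume zero: "of_int c * x + of_int d = 0"
  show False
  proof (cases "c = 0")
    case True
    then show False using zero assms(2) by simp
  next
    case False
    then have "x = - of_int d / of_int c" using zero by (simp add: field_simps)
    then show False using assms(1) by simp
  qed
qed

lemma moebius_compose:
  fixes x :: real
  assumes "of_int c * x + of_int d \<noteq> 0"
  shows "(of_int a' * ((of_int a * x + of_int b) / (of_int c * x + of_int d)) + of_int b') /
           (of_int c' * ((of_int a * x + of_int b) / (of_int c * x + of_int d)) + of_int d') =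
         (of_int (a' * a + b' * c) * x + of_int (a' * b + b' * d)) /
           (of_int (c' * a + d' * c) * x + of_int (c' * b + d' * d))"
proof -
  define D where "D = of_int c * x + of_int d"
  have "of_int a' * ((of_int a * x + of_int b) / D) + of_int b' =
          (of_int (a' * a + b' * c) * x + of_int (a' * b + b' * d)) / D"
    and "of_int c' * ((of_int a * x + of_int b) / D) + of_int d' =
          (of_int (c' * a + d' * c) * x + of_int (c' * b + d' * d)) / D"
    using assms by (simp_all add: D_def field_simps)
  then show ?thesis
    using assms by (simp add: D_def[symmetric])
qed

lemma psl2z_equiv_refl: "psl2z_equiv x x"
  unfolding psl2z_equiv_def by (rule exI[of _ 1], rule exI[of _ 0], rule exI[of _ 0], rule exI[of _ 1]) simp

text \<open>Irrationality of \<open>x\<close> excludes a vanishing denominator, where the junk value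
  \<open>t / 0 = 0\<close> would invalidate the composition formula.\<close>

lemma psl2z_equiv_trans:
  assumes "x \<notin> \<rat>" and "psl2z_equiv x y" and "psl2z_equiv y z"
  shows "psl2z_equiv x z"
proof -
  obtain a b c d :: int
    where det: "a * d - b * c = 1" and y: "y = (of_int a * x + of_int b) / (of_int c * x + of_int d)"
    using assms(2) by (auto simp: psl2z_equiv_def)
  obtain a' b' c' d' :: int
    where det': "a' * d' - b' * c' = 1" and z: "z = (of_int a' * y + of_int b') / (of_int c' * y + of_int d')"
    using assms(3) by (auto simp: psl2z_equiv_def)
  have "(a' * a + b' * c) * (c' * b + d' * d) - (a' * b + b' * d) * (c' * a + d' * c)
          = (a' * d' - b' * c') * (a * d - b * c)"
    by (simp add: algebra_simps)
  then show ?thesis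
    unfolding psl2z_equiv_def z y
    using det det' moebius_compose[OF moebius_denominator_nonzero[OF assms(1) det]] by fastforce
qed

lemma moebius_inverse:
  fixes x :: real
  assumes "x \<notin> \<rat>" and det: "a * d - b * c = 1"
  defines "y \<equiv> (of_int a * x + of_int b) / (of_int c * x + of_int d)"
  shows "x = (of_int d * y + of_int (- b)) / (of_int (- c) * y + of_int a)"
proof -
  have "(of_int d * y + of_int (- b)) / (of_int (- c) * y + of_int a) =
          (of_int (d * a + (- b) * c) * x + of_int (d * b + (- b) * d)) /
            (of_int ((- c) * a + a * c) * x + of_int ((- c) * b + a * d))"
    unfolding y_def by (rule moebius_compose[OF moebius_denominator_nonzero[OF assms(1) det]])
  also have "\<dots> = x"
    using det by (simp add: algebra_simps)
  finally show ?thesis ..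
qed

lemma moebius_irrational:
  fixes x :: real
  assumes "x \<notin> \<rat>" and "a * d - b * c = 1"
  shows "(of_int a * x + of_int b) / (of_int c * x + of_int d) \<notin> \<rat>"
  using moebius_inverse[OF assms] assms(1) by (metis Rats_add Rats_divide Rats_mult Rats_of_int)

lemma psl2z_equiv_sym:
  assumes "x \<notin> \<rat>" and "psl2z_equiv x y"
  shows "psl2z_equiv y x"
proof -
  obtain a b c d :: int
    where det: "a * d - b * c = 1" and y: "y = (of_int a * x + of_int b) / (of_int c * x + of_int d)"
    using assms(2) by (auto simp: psl2z_equiv_def)
  have "d * a - (- b) * (- c) = 1"
    using det by (simp add: algebra_simps)
  then show ?thesis
    unfolding psl2z_equiv_def using moebius_inverse[OF assms(1) det] y by blast
qed

lemma psl2z_equiv_uminus: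
  assumes "psl2z_equiv x y"
  shows "psl2z_equiv (- x) (- y)"
proof -
  obtain a b c d :: int
    where det: "a * d - b * c = 1" and y: "y = (of_int a * x + of_int b) / (of_int c * x + of_int d)"
    using assms by (auto simp: psl2z_equiv_def)
  have "- y = (of_int a * (- x) + of_int (- b)) / (of_int (- c) * (- x) + of_int d)"
    by (simp add: y minus_divide_left)
  moreover have "a * d - (- b) * (- c) = 1"
    using det by simp
  ultimately show ?thesis
    unfolding psl2z_equiv_def by blast
qed

section \<open>Lehner orbits and accumulated signs\<close>

lemma lehner_mem_Icc: "z \<in> {1..2} \<Longrightarrow> lehner z \<in> {1..2}"
  by (auto simp: lehner_def field_simps)

lemma lehner_funpow_mem_Icc: "z \<in> {1..2} \<Longrightarrow> (lehner ^^ n) z \<in> {1..2}"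
  by (induction n) (simp_all del: atLeastAtMost_iff add: lehner_mem_Icc)

lemma lehner_irrational:
  assumes "z \<in> {1<..<2} - \<rat>"
  shows "lehner z \<in> {1<..<2} - \<rat>"
proof -
  have z: "1 < z" "z < 2" "z \<notin> \<rat>"
    using assms by auto
  have "z \<noteq> 3/2"
    using z(3) by (metis Rats_divide Rats_number_of)
  have "lehner z \<notin> \<rat>"
    using z(3) by (simp add: lehner_def Rats_diff_iff flip: inverse_eq_divide)
  then show ?thesis
    using z \<open>z \<noteq> 3/2\<close> by (auto simp: lehner_def field_simps)
qed

lemma lehner_funpow_irrational: "z \<in> {1<..<2} - \<rat> \<Longrightarrow> (lehner ^^ n) z \<in> {1<..<2} - \<rat>"
  by (induction n) (simp_all only: funpow.simps comp_apply id_apply lehner_irrational)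

lemma funpow_add_apply: "(f ^^ (m + n)) x = (f ^^ n) ((f ^^ m) x)"
  by (simp add: funpow_add add.commute[of m])

lemma lehner_digit_add: "lehner_digit z (r + i) = lehner_digit ((lehner ^^ r) z) i"
  by (simp add: lehner_digit_def funpow_add_apply)

definition lehner_sign :: "real \<Rightarrow> nat \<Rightarrow> real" where
  "lehner_sign z n = (\<Prod>i<n. - of_int (snd (lehner_digit z i)))"

lemma lehner_sign_0 [simp]: "lehner_sign z 0 = 1"
  by (simp add: lehner_sign_def)

lemma lehner_sign_Suc: "lehner_sign z (Suc n) = lehner_sign z n * (if (lehner ^^ n) z < 3/2 then 1 else -1)"
  by (simp add: lehner_sign_def lehner_digit_def)

lemma lehner_sign_add: "lehner_sign z (r + p) = lehner_sign z r * lehner_sign ((lehner ^^ r) z) p"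
proof (induction p)
  case 0
  then show ?case by simp
next
  case (Suc p)
  then show ?case
    using lehner_digit_add[of z r p] by (simp add: lehner_sign_def)
qed

lemma lehner_sign_Suc_left: "lehner_sign z (Suc n) = (if z < 3/2 then 1 else -1) * lehner_sign (lehner z) n"
  using lehner_sign_add[of z 1 n] by (simp add: lehner_sign_Suc)

lemma lehner_sign_cases: "lehner_sign z n = 1 \<or> lehner_sign z n = -1"
  by (induction n) (auto simp: lehner_sign_def lehner_digit_def)

section \<open>Convergence of Lehner continued fractions\<close>

definition digit_map :: "int \<times> int \<Rightarrow> real \<Rightarrow> real" where
  "digit_map p t = of_int (fst p) + of_int (snd p) / t"

fun digit_maps :: "(nat \<Rightarrow> int \<times> int) \<Rightarrow> nat \<Rightarrow> real \<Rightarrow> real" where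
  "digit_maps d 0 t = t"
| "digit_maps d (Suc n) t = digit_maps d n (digit_map (d n) t)"

lemma digit_maps_Suc_left: "digit_maps d (Suc n) t = digit_map (d 0) (digit_maps (\<lambda>i. d (Suc i)) n t)"
  by (induction n arbitrary: t) auto

lemma cf_fin_eq_digit_maps: "cf_fin d n k = digit_maps (\<lambda>i. d (k + i)) n (of_int (fst (d (k + n))))"
proof (induction n arbitrary: k)
  case 0
  then show ?case by simp
next
  case (Suc n)
  then show ?case
    by (simp only: digit_maps_Suc_left) (simp add: digit_map_def)
qed

lemma digit_maps_lehner_digit:
  assumes "z \<in> {1..2}"
  shows "digit_maps (lehner_digit z) n ((lehner ^^ n) z) = z"
proof (induction n)
  case 0
  then show ?case by simp
next
  case (Suc n)
  have "digit_map (lehner_digit z n) (lehner ((lehner ^^ n) z)) = (lehner ^^ n) z"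
    using lehner_funpow_mem_Icc[OF assms, of n]
    by (auto simp: digit_map_def lehner_digit_def lehner_def)
  then show ?case
    using Suc by simp
qed

text \<open>In the coordinate \<open>u = t - 1\<close> the digit maps for \<open>(2,-1)\<close> and \<open>(1,1)\<close> are
  \<open>u \<mapsto> u/(1+u)\<close> and \<open>u \<mapsto> 1/(1+u)\<close>; \<open>(P,Q,R,S)\<close> below is the matrix of their
  composition, acting on \<open>u\<close> by \<open>u \<mapsto> (P u + Q)/(R u + S)\<close>.\<close>

fun digit_maps_matrix :: "(nat \<Rightarrow> int \<times> int) \<Rightarrow> nat \<Rightarrow> real \<times> real \<times> real \<times> real" where
  "digit_maps_matrix d 0 = (1, 0, 0, 1)"
| "digit_maps_matrix d (Suc n) = (case digit_maps_matrix d n of (P, Q, R, S) \<Rightarrow>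
     if d n = (2, -1) then (P + Q, Q, R + S, S) else (Q, P + Q, S, R + S))"

lemma digit_maps_matrix_bounds:
  assumes "digit_maps_matrix d n = (P, Q, R, S)"
  shows "R \<ge> 0 \<and> S \<ge> 1 \<and> R + S \<ge> real n + 1 \<and> \<bar>P * S - Q * R\<bar> = 1"
  using assms
proof (induction n arbitrary: P Q R S)
  case 0
  then show ?case by simp
next
  case (Suc n)
  obtain P0 Q0 R0 S0 where m: "digit_maps_matrix d n = (P0, Q0, R0, S0)"
    by (cases "digit_maps_matrix d n") auto
  show ?case
    using Suc.prems Suc.IH[OF m] by (auto simp: m algebra_simps abs_minus_commute split: if_splits)
qed

lemma moebius_scale:
  fixes k :: real
  assumes "k \<noteq> 0"
  shows "(P * (w / k) + Q) / (R * (w / k) + S) = (P * w + Q * k) / (R * w + S * k)"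
proof -
  have "P * (w / k) + Q = (P * w + Q * k) / k" "R * (w / k) + S = (R * w + S * k) / k"
    using assms by (simp_all add: field_simps)
  then show ?thesis
    using assms by simp
qed

lemma digit_maps_matrix_eq:
  assumes alphabet: "\<And>k. d k = (2, -1) \<or> d k = (1, 1)"
    and "digit_maps_matrix d n = (P, Q, R, S)" and "u \<in> {0..1}"
  shows "digit_maps d n (1 + u) = 1 + (P * u + Q) / (R * u + S)"
  using assms(2,3)
proof (induction n arbitrary: P Q R S u)
  case 0
  then show ?case by simp
next
  case (Suc n)
  obtain P0 Q0 R0 S0 where m: "digit_maps_matrix d n = (P0, Q0, R0, S0)"
    by (cases "digit_maps_matrix d n") auto
  define w where "w = (if d n = (2, -1) then u else 1)"
  have step: "digit_map (d n) (1 + u) = 1 + w / (1 + u)"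
    using alphabet[of n] Suc.prems(2) by (auto simp: w_def digit_map_def field_simps)
  have w: "w / (1 + u) \<in> {0..1}"
    using Suc.prems(2) by (auto simp: w_def)
  have "(P0 * (w / (1 + u)) + Q0) / (R0 * (w / (1 + u)) + S0) =
          (P0 * w + Q0 * (1 + u)) / (R0 * w + S0 * (1 + u))"
    using Suc.prems(2) by (intro moebius_scale) auto
  also have "\<dots> = (P * u + Q) / (R * u + S)"
    using Suc.prems(1) alphabet[of n] by (auto simp: m w_def algebra_simps)
  finally show ?case
    using Suc.IH[OF m w] step by simp
qed

lemma moebius_diff_bound:
  fixes P Q R S u1 u2 :: real
  assumes "R \<ge> 0" "S \<ge> 1" "\<bar>P * S - Q * R\<bar> = 1" "u1 \<in> {0..1}" "u2 \<in> {0..1}"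
  shows "\<bar>(P * u1 + Q) / (R * u1 + S) - (P * u2 + Q) / (R * u2 + S)\<bar> \<le> 1 / (R + S)"
proof -
  define X1 X2 where "X1 = R * u1 + S" and "X2 = R * u2 + S"
  define m where "m = max u1 u2"
  have X: "X1 \<ge> 1" "X2 \<ge> 1"
    using assms by (simp_all add: X1_def X2_def add_increasing)
  have "(P * u1 + Q) / X1 - (P * u2 + Q) / X2 = (P * S - Q * R) * (u1 - u2) / (X1 * X2)"
    using X by (simp add: X1_def X2_def field_simps)
  then have diff: "\<bar>(P * u1 + Q) / X1 - (P * u2 + Q) / X2\<bar> = \<bar>u1 - u2\<bar> / (X1 * X2)"
    using assms(3) X by (simp add: abs_mult)
  have "\<bar>u1 - u2\<bar> * (R + S) \<le> m * (R + S)"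
    using assms by (intro mult_right_mono) (auto simp: m_def)
  also have "\<dots> \<le> R * m + S"
    using assms by (auto simp: m_def max_def algebra_simps mult_left_le_one_le)
  also have "\<dots> \<le> X1 * X2"
  proof (cases "u1 \<le> u2")
    case True
    then have "R * m + S = X2" by (simp add: m_def X2_def)
    then show ?thesis using X mult_right_mono[of 1 X1 X2] by simp
  next
    case False
    then have "R * m + S = X1" by (simp add: m_def X1_def)
    then show ?thesis using X mult_left_mono[of 1 X2 X1] by simp
  qed
  finally have "\<bar>u1 - u2\<bar> / (X1 * X2) \<le> 1 / (R + S)"
    using X assms by (simp add: divide_simps)
  then show ?thesis
    using diff by (simp add: X1_def X2_def)
qed

lemma cf_val_lehner_digit:
  assumes "z \<in> {1..2}"
  shows "cf_val (lehner_digit z) = z"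
proof -
  define d where "d = lehner_digit z"
  have alphabet: "d k = (2, -1) \<or> d k = (1, 1)" for k
    by (simp add: d_def lehner_digit_def)
  have bound: "\<bar>cf_fin d n 0 - z\<bar> \<le> inverse (real (Suc n))" for n
  proof -
    obtain P Q R S where m: "digit_maps_matrix d n = (P, Q, R, S)"
      by (cases "digit_maps_matrix d n") auto
    note bounds = digit_maps_matrix_bounds[OF m]
    define u1 where "u1 = of_int (fst (d n)) - (1::real)"
    define u2 where "u2 = (lehner ^^ n) z - 1"
    have u: "u1 \<in> {0..1}" "u2 \<in> {0..1}"
      using alphabet[of n] lehner_funpow_mem_Icc[OF assms, of n] by (auto simp: u1_def u2_def)
    have "cf_fin d n 0 = 1 + (P * u1 + Q) / (R * u1 + S)"
      using cf_fin_eq_digit_maps[of d n 0] digit_maps_matrix_eq[OF alphabet m u(1)]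
      by (simp add: u1_def)
    moreover have "z = 1 + (P * u2 + Q) / (R * u2 + S)"
      using digit_maps_lehner_digit[OF assms, of n] digit_maps_matrix_eq[OF alphabet m u(2)]
      by (simp add: u2_def d_def)
    ultimately have "\<bar>cf_fin d n 0 - z\<bar> \<le> 1 / (R + S)"
      using moebius_diff_bound[of R S P Q u1 u2] bounds u by simp
    also have "\<dots> \<le> inverse (real (Suc n))"
      using bounds by (simp add: divide_simps)
    finally show ?thesis .
  qed
  have "\<forall>n. norm (cf_fin d n 0 - z) \<le> norm (inverse (real (Suc n))) * 1"
    using bound by simp
  then have "(\<lambda>n. cf_fin d n 0 - z) \<longlonglongrightarrow> 0"
    by (rule tendsto_0_le[OF LIMSEQ_inverse_real_of_nat always_eventually])
  then have "(\<lambda>n. cf_fin d n 0) \<longlonglongrightarrow> z"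
    by (rule LIM_zero_cancel)
  then show ?thesis
    by (simp add: cf_val_def limI d_def)
qed

section \<open>Tails\<close>

lemma lehner_tail_eq:
  assumes "z \<in> {1..2}"
  shows "lehner_tail m z = lehner_sign z (Suc m) * (lehner ^^ Suc m) z"
proof -
  have sign: "(\<Prod>i\<le>m. - of_int (snd (lehner_digit z i))) = lehner_sign z (Suc m)"
    by (simp add: lehner_sign_def lessThan_Suc_atMost)
  have digits: "(\<lambda>k. lehner_digit z (m + 1 + k)) = lehner_digit ((lehner ^^ Suc m) z)"
    using lehner_digit_add[of z "Suc m"] by simp
  show ?thesis
    unfolding lehner_tail_def sign digits cf_val_lehner_digit[OF lehner_funpow_mem_Icc[OF assms]] ..
qed

lemma lehner_tail_add_eq:
  assumes "\<alpha> \<in> {1..2}" "\<beta> \<in> {1..2}"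
    and "(lehner ^^ r) \<alpha> = (lehner ^^ s) \<beta>" "lehner_sign \<alpha> r = lehner_sign \<beta> s"
  shows "lehner_tail (r + k) \<alpha> = lehner_tail (s + k) \<beta>"
proof -
  have "lehner_tail (r + k) \<alpha> = lehner_sign \<alpha> (r + Suc k) * (lehner ^^ (r + Suc k)) \<alpha>"
    using lehner_tail_eq[OF assms(1)] by simp
  also have "\<dots> = lehner_sign \<beta> (s + Suc k) * (lehner ^^ (s + Suc k)) \<beta>"
    using assms(3,4) by (simp only: lehner_sign_add funpow_add_apply)
  also have "\<dots> = lehner_tail (s + k) \<beta>"
    using lehner_tail_eq[OF assms(2)] by simp
  finally show ?thesis .
qed

lemma psl2z_equiv_lehner:
  assumes "v \<in> {1<..<2}"
  shows "psl2z_equiv v ((if v < 3/2 then 1 else -1) * lehner v)"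
proof (cases "v < 3/2")
  case True
  then have "(if v < 3/2 then 1 else -1) * lehner v = (of_int 0 * v + of_int 1) / (of_int (-1) * v + of_int 2)"
    by (simp add: lehner_def)
  then show ?thesis
    unfolding psl2z_equiv_def by (intro exI[of _ 0] exI[of _ 1] exI[of _ "-1"] exI[of _ 2]) simp
next
  case False
  then have "(if v < 3/2 then 1 else -1) * lehner v = (of_int 0 * v + of_int (-1)) / (of_int 1 * v + of_int (-1))"
    by (simp add: lehner_def)
  then show ?thesis
    unfolding psl2z_equiv_def by (intro exI[of _ 0] exI[of _ "-1"] exI[of _ 1] exI[of _ "-1"]) simp
qed

lemma psl2z_equiv_mult_sign:
  assumes "c = 1 \<or> c = -1" and "psl2z_equiv x y"
  shows "psl2z_equiv (c * x) (c * y)"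
  using assms psl2z_equiv_uminus by auto

lemma psl2z_equiv_signed_iterate:
  assumes z: "z \<in> {1<..<2} - \<rat>"
  shows "psl2z_equiv z (lehner_sign z n * (lehner ^^ n) z)"
proof (induction n)
  case 0
  show ?case by (simp add: psl2z_equiv_refl)
next
  case (Suc n)
  define v where "v = (lehner ^^ n) z"
  have "psl2z_equiv (lehner_sign z n * v) (lehner_sign z n * ((if v < 3/2 then 1 else -1) * lehner v))"
    using psl2z_equiv_mult_sign[OF lehner_sign_cases psl2z_equiv_lehner] lehner_funpow_irrational[OF z, of n]
    by (simp add: v_def)
  moreover have "lehner_sign z n * ((if v < 3/2 then 1 else -1) * lehner v) =
                  lehner_sign z (Suc n) * (lehner ^^ Suc n) z"
    by (simp add: lehner_sign_Suc v_def)
  ultimately have "psl2z_equiv (lehner_sign z n * (lehner ^^ n) z) (lehner_sign z (Suc n) * (lehner ^^ Suc n) z)"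
    by (simp only: v_def)
  then show ?case
    using psl2z_equiv_trans[OF _ Suc.IH] z by blast
qed

section \<open>Orbit equivalence\<close>

definition lehner_normalize :: "real \<Rightarrow> real" where
  "lehner_normalize x = x - of_int \<lfloor>x\<rfloor> + 1"

definition lehner_orbit_equiv :: "real \<Rightarrow> real \<Rightarrow> bool" where
  "lehner_orbit_equiv x y \<longleftrightarrow>
     (\<exists>r s. (lehner ^^ r) (lehner_normalize x) = (lehner ^^ s) (lehner_normalize y) \<and>
            lehner_sign (lehner_normalize x) r = lehner_sign (lehner_normalize y) s)"

lemma lehner_normalize_eq:
  assumes "x - of_int n \<in> {1..<2}"
  shows "lehner_normalize x = x - of_int n"
proof -
  have "\<lfloor>x\<rfloor> = n + 1"
    using assms by (simp add: floor_eq_iff)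
  then show ?thesis
    by (simp add: lehner_normalize_def)
qed

lemma lehner_normalize_add_int: "lehner_normalize (x + of_int n) = lehner_normalize x"
  by (simp add: lehner_normalize_def)

lemma lehner_orbit_equiv_sym: "lehner_orbit_equiv x y \<Longrightarrow> lehner_orbit_equiv y x"
  unfolding lehner_orbit_equiv_def by metis

lemma lehner_orbit_equiv_trans:
  assumes "lehner_orbit_equiv x y" and "lehner_orbit_equiv y w"
  shows "lehner_orbit_equiv x w"
proof -
  define a b c where "a = lehner_normalize x" and "b = lehner_normalize y" and "c = lehner_normalize w"
  obtain r s where rs: "(lehner ^^ r) a = (lehner ^^ s) b" "lehner_sign a r = lehner_sign b s"
    using assms(1) by (auto simp: lehner_orbit_equiv_def a_def b_def)
  obtain p q where pq: "(lehner ^^ p) b = (lehner ^^ q) c" "lehner_sign b p = lehner_sign c q"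
    using assms(2) by (auto simp: lehner_orbit_equiv_def b_def c_def)
  have "(lehner ^^ (p + r)) a = (lehner ^^ (s + q)) c"
    using rs(1) pq(1) by (metis funpow_add_apply add.commute)
  moreover have "lehner_sign a (r + p) = lehner_sign c (q + s)"
    using rs pq lehner_sign_add[of a r p] lehner_sign_add[of b s p] lehner_sign_add[of b p s]
      lehner_sign_add[of c q s] by (simp add: add.commute)
  ultimately show ?thesis
    unfolding lehner_orbit_equiv_def a_def c_def by (metis add.commute)
qed

lemma lehner_orbit_equiv_add_int: "lehner_orbit_equiv x (x + of_int n)"
  by (simp add: lehner_orbit_equiv_def lehner_normalize_add_int) (intro exI[of _ 0]; simp)

lemma lehner_funpow_one_plus_inverse:
  assumes "z \<in> {1<..<2}"
  shows "(lehner ^^ Suc j) (1 + 1 / (z + real j)) = z \<and> lehner_sign (1 + 1 / (z + real j)) (Suc j) = -1"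
proof (induction j)
  case 0
  have "\<not> 1 + 1 / z < 3/2"
    using assms by (simp add: field_simps)
  then show ?case
    using assms by (simp add: lehner_def lehner_sign_def lehner_digit_def)
next
  case (Suc j)
  define w where "w = 1 + 1 / (z + real (Suc j))"
  have "w < 3/2"
    using assms by (simp add: w_def field_simps)
  moreover have "lehner w = 1 + 1 / (z + real j)"
    using \<open>w < 3/2\<close> assms by (simp add: lehner_def w_def field_simps)
  ultimately show ?case
    using Suc by (simp add: lehner_sign_Suc_left funpow_Suc_right w_def del: funpow.simps)
qed

lemma lehner_funpow_two_minus_inverse:
  assumes "z \<in> {1<..<2}"
  shows "(lehner ^^ Suc j) (2 - 1 / (z + real j)) = z \<and> lehner_sign (2 - 1 / (z + real j)) (Suc j) = 1"
proof (cases j)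
  case 0
  have "2 - 1 / z < 3/2"
    using assms by (simp add: field_simps)
  then show ?thesis
    using 0 assms by (simp add: lehner_def lehner_sign_def lehner_digit_def)
next
  case (Suc i)
  define w where "w = 2 - 1 / (z + real (Suc i))"
  have "\<not> w < 3/2"
    using assms by (simp add: w_def field_simps)
  moreover have "lehner w = 1 + 1 / (z + real i)"
    using \<open>\<not> w < 3/2\<close> assms by (simp add: lehner_def w_def field_simps)
  ultimately show ?thesis
    using lehner_funpow_one_plus_inverse[OF assms, of i] Suc
    by (simp add: lehner_sign_Suc_left funpow_Suc_right w_def del: funpow.simps)
qed

lemma irrational_gt_one_decompose:
  assumes "w > 1" and "w \<notin> \<rat>"
  obtains j z where "z \<in> {1<..<2} - \<rat>" and "w = z + real j"
proof
  define z where "z = lehner_normalize w"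
  have "w = z - 1 + of_int \<lfloor>w\<rfloor>"
    by (simp add: z_def lehner_normalize_def)
  then have "z \<notin> \<rat>"
    using assms(2) by (metis Rats_1 Rats_add Rats_diff Rats_of_int)
  then have "z \<noteq> 1"
    by auto
  then show "z \<in> {1<..<2} - \<rat>"
    using \<open>z \<notin> \<rat>\<close> by (auto simp: z_def lehner_normalize_def) linarith+
  show "w = z + real (nat (\<lfloor>w\<rfloor> - 1))"
    using assms(1) by (simp add: z_def lehner_normalize_def)
qed

lemma lehner_orbit_equiv_inverse_gt_one:
  assumes "x > 1" and "x \<notin> \<rat>"
  shows "lehner_orbit_equiv x (-1 / x)"
proof -
  obtain k z where z: "z \<in> {1<..<2} - \<rat>" and x: "x = z + real k"
    using irrational_gt_one_decompose[OF assms] .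
  have "lehner_normalize x = z"
    using lehner_normalize_eq[of x "int k"] z by (simp add: x)
  moreover have "lehner_normalize (-1 / x) = 2 - 1 / (z + real k)"
    using lehner_normalize_eq[of "-1 / x" "-2"] assms(1) by (simp add: x field_simps)
  ultimately have "(lehner ^^ 0) (lehner_normalize x) = (lehner ^^ Suc k) (lehner_normalize (-1 / x))
    \<and> lehner_sign (lehner_normalize x) 0 = lehner_sign (lehner_normalize (-1 / x)) (Suc k)"
    using lehner_funpow_two_minus_inverse[of z k] z by simp
  then show ?thesis
    unfolding lehner_orbit_equiv_def by blast
qed

lemma lehner_orbit_equiv_inverse_lt_one:
  assumes "0 < x" "x < 1" and "x \<notin> \<rat>"
  shows "lehner_orbit_equiv x (-1 / x)"
proof -
  have "1 / x > 1"
    using assms by (simp add: field_simps)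
  moreover have "1 / x \<notin> \<rat>"
    using assms(3) by (simp flip: inverse_eq_divide)
  ultimately
  obtain j z where z: "z \<in> {1<..<2} - \<rat>" and x: "1 / x = z + real j"
    using irrational_gt_one_decompose by blast
  have "1 / (z - 1) > 1"
    using z by (simp add: field_simps)
  moreover have "1 / (z - 1) \<notin> \<rat>"
    using z by (simp add: Rats_diff_iff flip: inverse_eq_divide)
  ultimately
  obtain j' g where g: "g \<in> {1<..<2} - \<rat>" and z_eq: "1 / (z - 1) = g + real j'"
    using irrational_gt_one_decompose by blast
  have z': "z = 1 + 1 / (g + real j')"
    unfolding z_eq[symmetric] by simp
  have "lehner_normalize x = 1 + x"
    using lehner_normalize_eq[of x "-1"] assms by simp
  also have "\<dots> = 1 + 1 / (z + real j)"
    unfolding x[symmetric] by simp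
  finally have nx: "lehner_normalize x = 1 + 1 / (z + real j)" .
  have ny: "lehner_normalize (-1 / x) = 2 - 1 / (g + real j')"
  proof -
    have "-1 / x - of_int (- int j - 3) = 3 - z"
      using x by (simp add: minus_divide_left)
    then show ?thesis
      using lehner_normalize_eq[of "-1 / x" "- int j - 3"] z z' by auto
  qed
  have x_to_z: "(lehner ^^ Suc j) (1 + 1 / (z + real j)) = z"
    "lehner_sign (1 + 1 / (z + real j)) (Suc j) = -1"
    using lehner_funpow_one_plus_inverse[of z j] z by auto
  have z_to_g: "(lehner ^^ Suc j') z = g" "lehner_sign z (Suc j') = -1"
    using lehner_funpow_one_plus_inverse[of g j'] g z' by auto
  have y_to_g: "(lehner ^^ Suc j') (2 - 1 / (g + real j')) = g"
    "lehner_sign (2 - 1 / (g + real j')) (Suc j') = 1"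
    using lehner_funpow_two_minus_inverse[of g j'] g by auto
  have "(lehner ^^ (Suc j + Suc j')) (lehner_normalize x) = (lehner ^^ Suc j') (lehner_normalize (-1 / x))"
    by (simp only: funpow_add_apply nx ny x_to_z z_to_g y_to_g)
  moreover have "lehner_sign (lehner_normalize x) (Suc j + Suc j') = lehner_sign (lehner_normalize (-1 / x)) (Suc j')"
    by (simp only: lehner_sign_add nx ny x_to_z z_to_g y_to_g)
  ultimately show ?thesis
    unfolding lehner_orbit_equiv_def by blast
qed

lemma lehner_orbit_equiv_inverse:
  assumes "x \<notin> \<rat>"
  shows "lehner_orbit_equiv x (-1 / x)"
proof -
  have pos: "lehner_orbit_equiv y (-1 / y)" if "y > 0" "y \<notin> \<rat>" for y
  proof -
    have "y \<noteq> 1"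
      using that(2) by auto
    then consider "y > 1" | "y < 1"
      by linarith
    then show ?thesis
      using that lehner_orbit_equiv_inverse_gt_one lehner_orbit_equiv_inverse_lt_one by cases blast+
  qed
  have "x \<noteq> 0"
    using assms by auto
  then consider "x > 0" | "x < 0"
    by linarith
  then show ?thesis
  proof cases
    case 1
    then show ?thesis using pos assms by blast
  next
    case 2
    moreover have "-1 / x \<notin> \<rat>"
      using assms by (simp flip: inverse_eq_divide)
    ultimately have "lehner_orbit_equiv (-1 / x) (-1 / (-1 / x))"
      using pos[of "-1 / x"] 2 by (simp add: field_simps)
    then show ?thesis
      using lehner_orbit_equiv_sym by simp
  qed
qed

lemma lehner_orbit_equiv_moebius:
  assumes "a * d - b * c = 1" and "x \<notin> \<rat>"
  shows "lehner_orbit_equiv x ((of_int a * x + of_int b) / (of_int c * x + of_int d))"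
  using assms(1)
proof (induction "nat \<bar>c\<bar>" arbitrary: a b c d rule: less_induct)
  case less
  show ?case
  proof (cases "c = 0")
    case True
    then have "(a = 1 \<and> d = 1) \<or> (a = -1 \<and> d = -1)"
      using less.prems by (simp add: zmult_eq_1_iff)
    then have "(of_int a * x + of_int b) / (of_int c * x + of_int d) = x + of_int (b * d)"
      using True by (auto simp: field_simps)
    then show ?thesis
      using lehner_orbit_equiv_add_int[of x "b * d"] by simp
  next
    case False
    define q r where "q = a div c" and "r = a mod c"
    define y where "y = (of_int c * x + of_int d) / (of_int (- r) * x + of_int (q * d - b))"
    have a: "a = q * c + r"
      by (simp add: q_def r_def)
    have det: "c * (q * d - b) - d * (- r) = 1"
      using less.prems a by (simp add: algebra_simps)
    have "nat \<bar>- r\<bar> < nat \<bar>c\<bar>"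
      using False by (simp add: r_def abs_mod_less)
    then have "lehner_orbit_equiv x y"
      using less.hyps det unfolding y_def by blast
    moreover have "y \<notin> \<rat>"
      using moebius_irrational[OF assms(2) det] by (simp add: y_def)
    ultimately have "lehner_orbit_equiv x (-1 / y + of_int q)"
      using lehner_orbit_equiv_trans lehner_orbit_equiv_inverse lehner_orbit_equiv_add_int by blast
    moreover have "(of_int a * x + of_int b) / (of_int c * x + of_int d) = -1 / y + of_int q"
      using moebius_denominator_nonzero[OF assms(2) less.prems] a by (simp add: y_def field_simps)
    ultimately show ?thesis
      by simp
  qed
qed

lemma psl2z_equiv_lehner_tail:
  assumes "z \<in> {1<..<2} - \<rat>"
  shows "psl2z_equiv z (lehner_tail m z)"
proof -
  have "lehner_tail m z = lehner_sign z (Suc m) * (lehner ^^ Suc m) z"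
    using assms by (intro lehner_tail_eq) auto
  then show ?thesis
    using psl2z_equiv_signed_iterate[OF assms, of "Suc m"] by (simp only:)
qed

lemma psl2z_equiv_imp_lehner_tails_eq:
  assumes "\<alpha> \<in> {1<..<2} - \<rat>" "\<beta> \<in> {1<..<2} - \<rat>" and "psl2z_equiv \<alpha> \<beta>"
  shows "\<exists>r s. 0 < r \<and> 0 < s \<and> lehner_tail r \<alpha> = lehner_tail s \<beta>"
proof -
  obtain a b c d :: int
    where "a * d - b * c = 1" and "\<beta> = (of_int a * \<alpha> + of_int b) / (of_int c * \<alpha> + of_int d)"
    using assms(3) by (auto simp: psl2z_equiv_def)
  then have "lehner_orbit_equiv \<alpha> \<beta>"
    using lehner_orbit_equiv_moebius assms(1) by blast
  moreover have "lehner_normalize \<alpha> = \<alpha>" "lehner_normalize \<beta> = \<beta>"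
    using assms(1,2) lehner_normalize_eq[of \<alpha> 0] lehner_normalize_eq[of \<beta> 0] by simp_all
  ultimately obtain r s where "(lehner ^^ r) \<alpha> = (lehner ^^ s) \<beta>" "lehner_sign \<alpha> r = lehner_sign \<beta> s"
    unfolding lehner_orbit_equiv_def by auto
  then have "lehner_tail (Suc r) \<alpha> = lehner_tail (Suc s) \<beta>"
    using assms(1,2) lehner_tail_add_eq[of \<alpha> \<beta> r s 1] by simp
  then show ?thesis
    using zero_less_Suc by blast
qed

theorem proposition6p3:
  fixes \<alpha> \<beta> :: real
  assumes "1 < \<alpha>" "\<alpha> < 2" "\<alpha> \<notin> \<rat>"
      and "1 < \<beta>" "\<beta> < 2" "\<beta> \<notin> \<rat>"
  shows "(psl2z_equiv \<alpha> \<beta> \<longleftrightarrow>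
            (\<exists>r s :: nat. 0 < r \<and> 0 < s \<and> lehner_tail r \<alpha> = lehner_tail s \<beta>))
         \<and> (\<forall>m. psl2z_equiv \<alpha> (lehner_tail m \<alpha>))"
proof -
  have \<alpha>: "\<alpha> \<in> {1<..<2} - \<rat>" and \<beta>: "\<beta> \<in> {1<..<2} - \<rat>"
    using assms by auto
  have "psl2z_equiv \<alpha> \<beta>" if "lehner_tail r \<alpha> = lehner_tail s \<beta>" for r s
  proof -
    have "psl2z_equiv (lehner_tail r \<alpha>) \<beta>"
      unfolding that using psl2z_equiv_sym[OF assms(6) psl2z_equiv_lehner_tail[OF \<beta>]] .
    then show ?thesis
      using psl2z_equiv_trans[OF assms(3) psl2z_equiv_lehner_tail[OF \<alpha>]] by blast
  qed
  then show ?thesis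
    using psl2z_equiv_imp_lehner_tails_eq[OF \<alpha> \<beta>] psl2z_equiv_lehner_tail[OF \<alpha>] by blast
qed

end
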